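(* Let $\varphi,\psi$ be independent random variables uniform on $[0,\pi]$, and set $(\alpha,\beta)=(\varphi,\psi)$ if $\varphi+\psi<\pi$ and $(\alpha,\beta)=(\pi-\psi,\pi-\varphi)$ if $\varphi+\psi>\pi$. Let $T$ be the triangle with vertices $A=(0,0)$, $B=(1,0)$ and \[ C=\left(\frac{\tan\beta}{\tan\alpha+\tan\beta},\frac{\tan\alpha\tan\beta}{\tan\alpha+\tan\beta}\right). \] Let $a=\|B-C\|$ and $b=\|A-C\|$. Then $\max\{a,b\}$ has density $\dfrac{4}{\pi^2}\dfrac{\ln(x)-\ln|1-x|}{x}$ for $x>1/2$, and $\min\{a,b\}$ has density \[ \begin{cases}\dfrac{4}{\pi^2}\dfrac{\ln(1+y)-\ln(1-y)}{y} & \text{if } 0<y<1/2,\\[2mm] \dfrac{4}{\pi^2}\dfrac{\ln(1+y)-\ln(y)}{y} & \text{if } y>1/2.\end{cases} \]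
   Context: $\|\cdot\|$ is the Euclidean norm. *)

theory Defs
  imports "HOL-Probability.Probability"
begin

text \<open>The angles (alpha, beta) obtained from (phi, psi); on the null event
  phi + psi = pi we (arbitrarily) use the second branch.\<close>
definition angles :: "real \<Rightarrow> real \<Rightarrow> real \<times> real" where
  "angles \<phi> \<psi> = (if \<phi> + \<psi> < pi then (\<phi>, \<psi>) else (pi - \<psi>, pi - \<phi>))"

definition vertexC :: "real \<Rightarrow> real \<Rightarrow> real \<times> real" where
  "vertexC \<alpha> \<beta> = (tan \<beta> / (tan \<alpha> + tan \<beta>), tan \<alpha> * tan \<beta> / (tan \<alpha> + tan \<beta>))"

definition side_a :: "real \<Rightarrow> real \<Rightarrow> real" where
  "side_a \<phi> \<psi> = norm ((1, 0) - vertexC (fst (angles \<phi> \<psi>)) (snd (angles \<phi> \<psi>)))"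

definition side_b :: "real \<Rightarrow> real \<Rightarrow> real" where
  "side_b \<phi> \<psi> = norm ((0, 0) - vertexC (fst (angles \<phi> \<psi>)) (snd (angles \<phi> \<psi>)))"

definition max_density :: "real \<Rightarrow> real" where
  "max_density x = (if x > 1/2 then 4 / pi\<^sup>2 * ((ln x - ln \<bar>1 - x\<bar>) / x) else 0)"

definition min_density :: "real \<Rightarrow> real" where
  "min_density y = (if 0 < y \<and> y < 1/2 then 4 / pi\<^sup>2 * ((ln (1 + y) - ln (1 - y)) / y)
                    else if y > 1/2 then 4 / pi\<^sup>2 * ((ln (1 + y) - ln y) / y)
                    else 0)"

end

theory Submission
  imports Defs
begin

text \<open>
  By the law of sines the sides are \<open>a = sin \<alpha> / sin (\<alpha> + \<beta>)\<close> and
  \<open>b = sin \<beta> / sin (\<alpha> + \<beta>)\<close>. The folding \<open>(\<phi>, \<psi>) \<mapsto> (\<alpha>, \<beta>)\<close> maps each half of the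
  square \<open>[0, \<pi>]\<^sup>2\<close> measure-preservingly onto the triangle \<open>\<alpha>, \<beta> > 0, \<alpha> + \<beta> < \<pi>\<close>, so
  \<open>(\<alpha>, \<beta>)\<close> is uniform there with density \<open>2 / \<pi>\<^sup>2\<close>. Substituting \<open>\<alpha> \<mapsto> a\<close> for fixed
  \<open>\<beta>\<close>, and then \<open>\<beta> \<mapsto> b = sqrt (1 + a\<^sup>2 - 2 a cos \<beta>)\<close> for fixed \<open>a\<close> (law of cosines),
  turns \<open>d\<alpha> d\<beta>\<close> into \<open>da db / (a b)\<close> on the region \<open>\<bar>a - b\<bar> < 1 < a + b\<close>. This density
  of \<open>(a, b)\<close> is symmetric, and integrating \<open>1 / (a b)\<close> over the smaller, resp. larger,
  side gives the logarithmic densities of the maximum and the minimum.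
\<close>

section \<open>The triangle and its sides\<close>

lemma vertexC_eq:
  fixes \<alpha> \<beta> :: real
  assumes "cos \<alpha> \<noteq> 0" "cos \<beta> \<noteq> 0"
  shows "vertexC \<alpha> \<beta> = (cos \<alpha> * sin \<beta> / sin (\<alpha> + \<beta>), sin \<alpha> * sin \<beta> / sin (\<alpha> + \<beta>))"
proof -
  have "tan \<alpha> + tan \<beta> = sin (\<alpha> + \<beta>) / (cos \<alpha> * cos \<beta>)"
    using assms by (simp add: tan_def sin_add field_simps)
  then show ?thesis
    using assms by (simp add: vertexC_def tan_def)
qed

lemma norm_scaled_unit_vector:
  fixes r s c :: real
  assumes "s\<^sup>2 + c\<^sup>2 = 1"
  shows "norm (r * c, r * s) = \<bar>r\<bar>"
proof -
  have "(r * c)\<^sup>2 + (r * s)\<^sup>2 = r\<^sup>2"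
    using assms by (simp add: power_mult_distrib flip: distrib_left)
  then show ?thesis by (simp add: norm_Pair)
qed

lemma law_of_sines_vertexC:
  fixes \<alpha> \<beta> :: real
  assumes "cos \<alpha> \<noteq> 0" "cos \<beta> \<noteq> 0" "sin (\<alpha> + \<beta>) \<noteq> 0"
  shows "norm ((1, 0) - vertexC \<alpha> \<beta>) = \<bar>sin \<alpha> / sin (\<alpha> + \<beta>)\<bar>"
    and "norm ((0, 0) - vertexC \<alpha> \<beta>) = \<bar>sin \<beta> / sin (\<alpha> + \<beta>)\<bar>"
proof -
  define r where "r = sin \<alpha> / sin (\<alpha> + \<beta>)"
  define q where "q = - sin \<beta> / sin (\<alpha> + \<beta>)"
  have "(1, 0) - vertexC \<alpha> \<beta> = (r * cos \<beta>, r * - sin \<beta>)"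
    using assms(3) unfolding vertexC_eq[OF assms(1,2)] r_def
    by (simp add: field_simps sin_add)
  moreover have "norm (r * cos \<beta>, r * - sin \<beta>) = \<bar>r\<bar>"
    by (rule norm_scaled_unit_vector) simp
  ultimately show "norm ((1, 0) - vertexC \<alpha> \<beta>) = \<bar>sin \<alpha> / sin (\<alpha> + \<beta>)\<bar>"
    by (simp only: r_def)
  have "(0, 0) - vertexC \<alpha> \<beta> = (q * cos \<alpha>, q * sin \<alpha>)"
    unfolding vertexC_eq[OF assms(1,2)] q_def by simp
  moreover have "norm (q * cos \<alpha>, q * sin \<alpha>) = \<bar>q\<bar>"
    by (rule norm_scaled_unit_vector) simp
  ultimately show "norm ((0, 0) - vertexC \<alpha> \<beta>) = \<bar>sin \<beta> / sin (\<alpha> + \<beta>)\<bar>"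
    by (simp add: q_def)
qed

definition triangle_sides :: "real \<times> real \<Rightarrow> real \<times> real" where
  "triangle_sides = (\<lambda>(\<alpha>, \<beta>). (norm ((1, 0) - vertexC \<alpha> \<beta>), norm ((0, 0) - vertexC \<alpha> \<beta>)))"

lemma side_a_side_b_eq_triangle_sides: "(side_a \<phi> \<psi>, side_b \<phi> \<psi>) = triangle_sides (angles \<phi> \<psi>)"
  by (simp add: side_a_def side_b_def triangle_sides_def split_beta')

lemma triangle_sides_law_of_sines:
  fixes \<alpha> \<beta> :: real
  assumes "0 < \<alpha>" "0 < \<beta>" "\<alpha> + \<beta> < pi" "\<alpha> \<noteq> pi/2" "\<beta> \<noteq> pi/2"
  shows "triangle_sides (\<alpha>, \<beta>) = (sin \<alpha> / sin (\<alpha> + \<beta>), sin \<beta> / sin (\<alpha> + \<beta>))"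
proof -
  have "cos x \<noteq> 0" if "0 < x" "x < pi" "x \<noteq> pi/2" for x
    using that cos_inj_pi[of x "pi/2"] by auto
  with assms have "cos \<alpha> \<noteq> 0" "cos \<beta> \<noteq> 0" "0 < sin (\<alpha> + \<beta>)" "0 < sin \<alpha>" "0 < sin \<beta>"
    by (auto intro!: sin_gt_zero)
  then show ?thesis
    by (simp add: triangle_sides_def law_of_sines_vertexC)
qed

lemma measurable_triangle_sides [measurable]: "triangle_sides \<in> borel_measurable borel"
proof -
  have "triangle_sides \<in> borel_measurable (borel \<Otimes>\<^sub>M borel)"
    unfolding triangle_sides_def vertexC_def tan_def by (simp add: norm_Pair split_beta') measurable
  then show ?thesis
    by (simp add: borel_prod)
qed

lemma measurable_side_a [measurable]:
  assumes [measurable]: "f \<in> borel_measurable M" "g \<in> borel_measurable M"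
  shows "(\<lambda>x. side_a (f x) (g x)) \<in> borel_measurable M"
  unfolding side_a_def vertexC_def angles_def tan_def by (simp add: norm_Pair) measurable

lemma measurable_side_b [measurable]:
  assumes [measurable]: "f \<in> borel_measurable M" "g \<in> borel_measurable M"
  shows "(\<lambda>x. side_b (f x) (g x)) \<in> borel_measurable M"
  unfolding side_b_def vertexC_def angles_def tan_def by (simp add: norm_Pair) measurable

definition third_side :: "real \<Rightarrow> real \<Rightarrow> real" where
  "third_side a \<beta> = sqrt (1 + a\<^sup>2 - 2 * a * cos \<beta>)"

lemma law_of_cosines_sines:
  fixes \<alpha> \<beta> :: real
  shows "(sin (\<alpha> + \<beta>))\<^sup>2 + (sin \<alpha>)\<^sup>2 - 2 * sin \<alpha> * sin (\<alpha> + \<beta>) * cos \<beta> = (sin \<beta>)\<^sup>2"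
proof -
  have "(sin (\<alpha> + \<beta>))\<^sup>2 - 2 * sin \<alpha> * sin (\<alpha> + \<beta>) * cos \<beta>
      = (cos \<alpha>)\<^sup>2 * (sin \<beta>)\<^sup>2 - (sin \<alpha>)\<^sup>2 * (cos \<beta>)\<^sup>2"
    unfolding sin_add by (simp add: power2_eq_square algebra_simps)
  moreover have "(sin \<alpha>)\<^sup>2 * (cos \<beta>)\<^sup>2 = (sin \<alpha>)\<^sup>2 - (sin \<alpha>)\<^sup>2 * (sin \<beta>)\<^sup>2"
    by (simp add: cos_squared_eq algebra_simps)
  moreover have "(cos \<alpha>)\<^sup>2 * (sin \<beta>)\<^sup>2 + (sin \<alpha>)\<^sup>2 * (sin \<beta>)\<^sup>2 = (sin \<beta>)\<^sup>2"
    by (metis distrib_right mult_1 sin_cos_squared_add add.commute)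
  ultimately show ?thesis by linarith
qed

lemma third_side_sine_ratio:
  fixes \<alpha> \<beta> :: real
  assumes "0 < sin (\<alpha> + \<beta>)" "0 \<le> sin \<beta>"
  shows "third_side (sin \<alpha> / sin (\<alpha> + \<beta>)) \<beta> = sin \<beta> / sin (\<alpha> + \<beta>)"
proof -
  have "1 + (sin \<alpha> / sin (\<alpha> + \<beta>))\<^sup>2 - 2 * (sin \<alpha> / sin (\<alpha> + \<beta>)) * cos \<beta>
      = (sin \<beta> / sin (\<alpha> + \<beta>))\<^sup>2"
    using assms law_of_cosines_sines[of \<alpha> \<beta>] by (simp add: field_simps power2_eq_square)
  then show ?thesis
    using assms by (simp add: third_side_def)
qed

lemma third_side_lower_bound:
  fixes a \<beta> :: real
  assumes "0 \<le> a"
  shows "\<bar>1 - a\<bar> \<le> third_side a \<beta>"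
proof -
  have "(1 - a)\<^sup>2 \<le> 1 + a\<^sup>2 - 2 * a * cos \<beta>"
    using mult_left_mono[OF cos_le_one[of \<beta>], of "2 * a"] assms
    by (simp add: power2_eq_square algebra_simps)
  then show ?thesis
    unfolding third_side_def by (simp add: real_le_rsqrt)
qed

lemma third_side_pos: "0 \<le> a \<Longrightarrow> a \<noteq> 1 \<Longrightarrow> 0 < third_side a \<beta>"
  using third_side_lower_bound[of a \<beta>] by linarith

lemma third_side_strict_bounds:
  fixes a \<beta> :: real
  assumes "0 < a" "0 < \<beta>" "\<beta> < pi"
  shows "\<bar>1 - a\<bar> < third_side a \<beta>" "third_side a \<beta> < 1 + a"
proof -
  have "cos \<beta> < cos 0" "cos pi < cos \<beta>"
    using assms by (intro cos_monotone_0_pi; simp)+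
  then have "0 < 2 * a * (1 - cos \<beta>)" "0 < 2 * a * (1 + cos \<beta>)"
    using \<open>0 < a\<close> by simp_all
  moreover have "1 + a\<^sup>2 - 2 * a * cos \<beta> - (1 - a)\<^sup>2 = 2 * a * (1 - cos \<beta>)"
    "(1 + a)\<^sup>2 - (1 + a\<^sup>2 - 2 * a * cos \<beta>) = 2 * a * (1 + cos \<beta>)"
    by (simp_all add: power2_eq_square algebra_simps)
  ultimately have "(1 - a)\<^sup>2 < 1 + a\<^sup>2 - 2 * a * cos \<beta>" "1 + a\<^sup>2 - 2 * a * cos \<beta> < (1 + a)\<^sup>2"
    by linarith+
  then show "\<bar>1 - a\<bar> < third_side a \<beta>" "third_side a \<beta> < 1 + a"
    unfolding third_side_def using \<open>0 < a\<close> by (auto intro: real_less_rsqrt real_less_lsqrt)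
qed

lemma third_side_0: "third_side a 0 = \<bar>1 - a\<bar>"
proof -
  have "1 + a\<^sup>2 - 2 * a * cos 0 = (1 - a)\<^sup>2"
    by (simp add: power2_eq_square algebra_simps)
  then show ?thesis
    unfolding third_side_def by simp
qed

lemma third_side_pi:
  assumes "0 \<le> a"
  shows "third_side a pi = 1 + a"
proof -
  have "1 + a\<^sup>2 - 2 * a * cos pi = (1 + a)\<^sup>2"
    by (simp add: power2_eq_square algebra_simps)
  with assms show ?thesis
    unfolding third_side_def by simp
qed

lemma has_real_derivative_third_side:
  fixes a \<beta> :: real
  assumes "0 < third_side a \<beta>"
  shows "(third_side a has_real_derivative a * sin \<beta> / third_side a \<beta>) (at \<beta>)"
  using assms unfolding third_side_def[abs_def]
  by (auto intro!: derivative_eq_intros simp: field_simps)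

lemma has_real_derivative_sine_ratio:
  fixes \<alpha> \<beta> :: real
  assumes "sin (\<alpha> + \<beta>) \<noteq> 0"
  shows "((\<lambda>a. sin a / sin (a + \<beta>)) has_real_derivative sin \<beta> / (sin (\<alpha> + \<beta>))\<^sup>2) (at \<alpha>)"
proof -
  have "cos \<alpha> * sin (\<alpha> + \<beta>) - sin \<alpha> * cos (\<alpha> + \<beta>) = sin \<beta>"
    using sin_diff[of "\<alpha> + \<beta>" \<alpha>] by (simp add: algebra_simps)
  with assms show ?thesis
    by (auto intro!: derivative_eq_intros simp: power2_eq_square algebra_simps)
qed

lemma sine_ratio_tendsto_at_top:
  fixes \<beta> :: real
  assumes "0 < \<beta>" "\<beta> < pi"
  shows "filterlim (\<lambda>a. sin a / sin (a + \<beta>)) at_top (at_left (pi - \<beta>))"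
proof (rule LIM_at_top_divide)
  have "(sin \<longlongrightarrow> sin (pi - \<beta>)) (at_left (pi - \<beta>))"
    by (intro tendsto_intros)
  then show "(sin \<longlongrightarrow> sin \<beta>) (at_left (pi - \<beta>))" by simp
  show "0 < sin \<beta>" using assms by (intro sin_gt_zero)
  have "((\<lambda>a. sin (a + \<beta>)) \<longlongrightarrow> sin (pi - \<beta> + \<beta>)) (at_left (pi - \<beta>))"
    by (intro tendsto_intros)
  then show "((\<lambda>a. sin (a + \<beta>)) \<longlongrightarrow> 0) (at_left (pi - \<beta>))" by simp
  have "\<forall>\<^sub>F a in at_left (pi - \<beta>). a \<in> {0<..<pi - \<beta>}"
    using assms by (intro eventually_at_left_real) simp
  then show "\<forall>\<^sub>F a in at_left (pi - \<beta>). 0 < sin (a + \<beta>)"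
    by eventually_elim (use assms in \<open>auto intro: sin_gt_zero\<close>)
qed

lemma nn_integral_indicator_UN_incseq:
  fixes f :: "'a \<Rightarrow> ennreal"
  assumes [measurable]: "f \<in> borel_measurable M" "\<And>i. A i \<in> sets M" and "incseq A"
  shows "(\<integral>\<^sup>+x. f x * indicator (\<Union>i. A i) x \<partial>M) = (SUP i. \<integral>\<^sup>+x. f x * indicator (A i) x \<partial>M)"
proof -
  have "(SUP i. f x * indicator (A i) x) = f x * indicator (\<Union>i. A i) x" for x
  proof (cases "x \<in> (\<Union>i. A i)")
    case True
    then obtain j where "x \<in> A j" by auto
    then have "(SUP i. f x * indicator (A i) x) = f x"
      by (intro antisym SUP_least SUP_upper2[of j]) (auto simp: indicator_def)
    then show ?thesis using True by simp
  qed (auto simp: indicator_def)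
  moreover have "incseq (\<lambda>i x. f x * indicator (A i) x)"
    using \<open>incseq A\<close> by (auto simp: incseq_def le_fun_def indicator_def subset_eq)
  ultimately show ?thesis
    by (simp add: nn_integral_monotone_convergence_SUP[symmetric])
qed

lemma incseq_tendsto_at_left_real:
  fixes a b :: real
  assumes "a < b"
  obtains t :: "nat \<Rightarrow> real" where "incseq t" "\<And>n. t n \<in> {a<..<b}" "t \<longlonglongrightarrow> b"
proof
  define t where "t n = b - (b - a) / real (n + 2)" for n
  show "t n \<in> {a<..<b}" for n
    using assms by (auto simp: t_def field_simps intro!: add_less_le_mono mult_right_mono)
  show "incseq t"
    using assms unfolding incseq_def t_def by (auto intro!: divide_left_mono)
  have "(\<lambda>n. (b - a) / real (n + 2)) \<longlonglongrightarrow> 0"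
    using LIMSEQ_ignore_initial_segment[OF lim_const_over_n[of "b - a"], of 2] by simp
  from tendsto_diff[OF tendsto_const[of b] this] show "t \<longlonglongrightarrow> b"
    by (simp add: t_def[abs_def])
qed

lemma mono_on_DERIV_nonneg:
  fixes g g' :: "real \<Rightarrow> real"
  assumes "is_interval S"
    and deriv: "\<And>x. x \<in> S \<Longrightarrow> (g has_real_derivative g' x) (at x)"
    and nonneg: "\<And>x. x \<in> S \<Longrightarrow> 0 \<le> g' x"
  shows "mono_on S g"
proof (rule mono_onI)
  fix x y assume "x \<in> S" "y \<in> S" "x \<le> y"
  have xy: "{x..y} \<subseteq> S"
  proof
    fix z assume "z \<in> {x..y}"
    then show "z \<in> S"
      using mem_is_interval_1_I[OF \<open>is_interval S\<close> \<open>x \<in> S\<close> \<open>y \<in> S\<close>, of z] by simp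
  qed
  show "g x \<le> g y"
  proof (rule DERIV_nonneg_imp_increasing_open[OF \<open>x \<le> y\<close>])
    show "continuous_on {x..y} g"
      using xy by (intro continuous_at_imp_continuous_on ballI DERIV_isCont[OF deriv]) auto
    show "\<exists>D. (g has_real_derivative D) (at z) \<and> 0 \<le> D" if "x < z" "z < y" for z
    proof -
      have "z \<in> S" using xy that by auto
      with deriv nonneg show ?thesis by blast
    qed
  qed
qed

lemma UN_atLeastAtMost_filterlim_at_top:
  fixes u :: "nat \<Rightarrow> 'a :: linorder"
  assumes "filterlim u at_top sequentially"
  shows "(\<Union>n. {c..u n}) = {c..}"
proof (intro equalityI subsetI)
  fix y assume "y \<in> {c..}"
  moreover obtain n where "y \<le> u n"
    using assms by (auto simp: filterlim_at_top eventually_sequentially)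
  ultimately show "y \<in> (\<Union>n. {c..u n})" by auto
qed auto

lemma UN_atLeastAtMost_LIMSEQ:
  fixes t :: "nat \<Rightarrow> real"
  assumes "t \<longlonglongrightarrow> b" "\<And>n. t n < b"
  shows "(\<Union>n. {a..t n}) = {a..<b}"
proof (intro equalityI subsetI)
  fix x assume "x \<in> {a..<b}"
  moreover obtain n where "x < t n"
    using order_tendstoD(1)[OF assms(1), of x] \<open>x \<in> {a..<b}\<close> by (auto simp: eventually_sequentially)
  ultimately show "x \<in> (\<Union>n. {a..t n})" by (auto intro: less_imp_le)
qed (use assms(2) in \<open>auto intro: le_less_trans\<close>)

lemma nn_integral_substitution_at_top:
  fixes f :: "real \<Rightarrow> ennreal" and g g' :: "real \<Rightarrow> real"
  assumes [measurable]: "f \<in> borel_measurable borel" "g \<in> borel_measurable borel"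
      "g' \<in> borel_measurable borel"
    and "a < b"
    and deriv: "\<And>x. x \<in> {a..<b} \<Longrightarrow> (g has_real_derivative g' x) (at x)"
    and cont: "continuous_on {a..<b} g'"
    and nonneg: "\<And>x. x \<in> {a..<b} \<Longrightarrow> 0 \<le> g' x"
    and lim: "filterlim g at_top (at_left b)"
  shows "(\<integral>\<^sup>+y. f y * indicator {g a..} y \<partial>lborel)
       = (\<integral>\<^sup>+x. f (g x) * g' x * indicator {a..<b} x \<partial>lborel)"
proof -
  obtain t where t_inc: "incseq t" and t: "\<And>n. t n \<in> {a<..<b}" and "t \<longlonglongrightarrow> b"
    using incseq_tendsto_at_left_real[OF \<open>a < b\<close>] by blast
  have mono: "mono_on {a..<b} g"
    by (rule mono_on_DERIV_nonneg[OF _ deriv nonneg]) (simp_all add: is_interval_ic)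
  have image_inc: "incseq (\<lambda>n. {g a..g (t n)})"
    unfolding incseq_def
  proof (intro allI impI subsetI)
    fix m n y assume "m \<le> n" "y \<in> {g a..g (t m)}"
    moreover have "g (t m) \<le> g (t n)"
      using t[of m] t[of n] incseqD[OF t_inc \<open>m \<le> n\<close>] by (intro mono_onD[OF mono]) auto
    ultimately show "y \<in> {g a..g (t n)}" by auto
  qed
  have domain_inc: "incseq (\<lambda>n. {a..t n})"
    using t_inc by (auto simp: incseq_def intro: order_trans)
  have "filterlim t (at_left b) sequentially"
    using \<open>t \<longlonglongrightarrow> b\<close> t by (intro tendsto_imp_filterlim_at_left) auto
  from filterlim_compose[OF lim this] have image_UN: "(\<Union>n. {g a..g (t n)}) = {g a..}"
    by (rule UN_atLeastAtMost_filterlim_at_top)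
  have domain_UN: "(\<Union>n. {a..t n}) = {a..<b}"
    using \<open>t \<longlonglongrightarrow> b\<close> t by (intro UN_atLeastAtMost_LIMSEQ) auto
  have "(\<integral>\<^sup>+y. f y * indicator {g a..} y \<partial>lborel)
      = (SUP n. \<integral>\<^sup>+y. f y * indicator {g a..g (t n)} y \<partial>lborel)"
    unfolding image_UN[symmetric] by (rule nn_integral_indicator_UN_incseq[OF _ _ image_inc]) auto
  also have "\<dots> = (SUP n. \<integral>\<^sup>+x. f (g x) * g' x * indicator {a..t n} x \<partial>lborel)"
    using t by (intro SUP_cong refl nn_integral_substitution_aux deriv nonneg
        continuous_on_subset[OF cont]) (fastforce intro: le_less_trans)+
  also have "\<dots> = (\<integral>\<^sup>+x. f (g x) * g' x * indicator {a..<b} x \<partial>lborel)"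
    unfolding domain_UN[symmetric]
    by (rule nn_integral_indicator_UN_incseq[symmetric, OF _ _ domain_inc]) auto
  finally show ?thesis .
qed

lemma nn_integral_inverse_interval:
  fixes p q c :: real
  assumes "0 < p" "p < q" "0 < c"
  shows "(\<integral>\<^sup>+x. indicator {p<..<q} x * ennreal (1 / (c * x)) \<partial>lborel) = ennreal ((ln q - ln p) / c)"
proof -
  have "(\<integral>\<^sup>+x. indicator {p<..<q} x * ennreal (1 / (c * x)) \<partial>lborel)
      = (\<integral>\<^sup>+x. ennreal (1 / (c * x)) * indicator {p..q} x \<partial>lborel)"
    using AE_lborel_singleton[of p] AE_lborel_singleton[of q]
    by (intro nn_integral_cong_AE) (auto simp: indicator_def)
  also have "\<dots> = ennreal (ln q / c - ln p / c)"
  proof (rule nn_integral_FTC_Icc)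
    show "((\<lambda>x. ln x / c) has_real_derivative 1 / (c * x)) (at x)" if "x \<in> {p..q}" for x
      using that assms by (auto intro!: derivative_eq_intros)
  qed (use assms in auto)
  finally show ?thesis
    by (simp add: diff_divide_distrib)
qed

lemma nn_integral_cmult_weight:
  fixes h :: "'a \<Rightarrow> ennreal" and k :: "'a \<Rightarrow> real"
  assumes "0 \<le> c" "\<And>x. 0 \<le> k x" and [measurable]: "h \<in> borel_measurable M" "k \<in> borel_measurable M"
  shows "ennreal c * (\<integral>\<^sup>+x. h x * ennreal (k x) \<partial>M) = (\<integral>\<^sup>+x. ennreal (c * k x) * h x \<partial>M)"
proof -
  have "ennreal c * (\<integral>\<^sup>+x. h x * ennreal (k x) \<partial>M) = (\<integral>\<^sup>+x. ennreal c * (h x * ennreal (k x)) \<partial>M)"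
    by (rule nn_integral_cmult[symmetric]) measurable
  also have "\<dots> = (\<integral>\<^sup>+x. ennreal (c * k x) * h x \<partial>M)"
    using assms(1,2) by (intro nn_integral_cong) (simp add: ennreal_mult mult_ac)
  finally show ?thesis .
qed

lemma ennreal_mult_two: "0 \<le> c \<Longrightarrow> ennreal c * (2 * x) = ennreal (2 * c) * x"
  by (simp add: ennreal_mult mult_ac)

section \<open>From angles to side lengths\<close>

definition angle_integral :: "(real \<times> real \<Rightarrow> ennreal) \<Rightarrow> ennreal" where
  "angle_integral Q =
    (\<integral>\<^sup>+\<beta>. indicator {0<..<pi} \<beta> * (\<integral>\<^sup>+\<alpha>. indicator {0<..<pi - \<beta>} \<alpha> * Q (\<alpha>, \<beta>) \<partial>lborel) \<partial>lborel)"

definition side_region :: "(real \<times> real) set" where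
  "side_region = {(a, b). 0 < a \<and> 0 < b \<and> \<bar>a - b\<bar> < 1 \<and> 1 < a + b}"

lemma side_region_iff: "0 < a \<Longrightarrow> (a, b) \<in> side_region \<longleftrightarrow> b \<in> {\<bar>1 - a\<bar><..<1 + a}"
  unfolding side_region_def by auto

lemma side_region_swap: "(a, b) \<in> side_region \<longleftrightarrow> (b, a) \<in> side_region"
  unfolding side_region_def by auto

lemma side_region_sets [measurable]: "side_region \<in> sets (borel \<Otimes>\<^sub>M borel)"
proof -
  have "open {z :: real \<times> real. 0 < fst z \<and> 0 < snd z \<and> \<bar>fst z - snd z\<bar> < 1 \<and> 1 < fst z + snd z}"
    by (intro open_Collect_conj open_Collect_less continuous_intros)
  then show ?thesis
    unfolding borel_prod side_region_def by (simp add: case_prod_beta' borel_open)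
qed

definition side_integral :: "(real \<times> real \<Rightarrow> ennreal) \<Rightarrow> ennreal" where
  "side_integral H =
    (\<integral>\<^sup>+a. \<integral>\<^sup>+b. indicator side_region (a, b) * H (a, b) * ennreal (1 / (a * b)) \<partial>lborel \<partial>lborel)"

lemma nn_integral_angle_to_side:
  fixes H :: "real \<times> real \<Rightarrow> ennreal" and \<beta> :: real
  assumes [measurable]: "H \<in> borel_measurable borel" and \<beta>: "0 < \<beta>" "\<beta> < pi"
  shows "(\<integral>\<^sup>+\<alpha>. indicator {0<..<pi - \<beta>} \<alpha> * H (sin \<alpha> / sin (\<alpha> + \<beta>), sin \<beta> / sin (\<alpha> + \<beta>)) \<partial>lborel)
       = (\<integral>\<^sup>+a. indicator {0<..} a * H (a, third_side a \<beta>) * ennreal (sin \<beta> / (third_side a \<beta>)\<^sup>2) \<partial>lborel)"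
proof -
  define g where "g \<alpha> = sin \<alpha> / sin (\<alpha> + \<beta>)" for \<alpha>
  define g' where "g' \<alpha> = sin \<beta> / (sin (\<alpha> + \<beta>))\<^sup>2" for \<alpha>
  define f where "f a = H (a, third_side a \<beta>) * ennreal (sin \<beta> / (third_side a \<beta>)\<^sup>2)" for a
  have sin_sum_pos: "0 < sin (\<alpha> + \<beta>)" if "\<alpha> \<in> {0..<pi - \<beta>}" for \<alpha>
    using that \<beta> by (intro sin_gt_zero) auto
  have sin_\<beta>: "0 < sin \<beta>"
    using \<beta> by (intro sin_gt_zero)
  have [measurable]: "f \<in> borel_measurable borel"
    unfolding f_def third_side_def by measurable
  have "(\<integral>\<^sup>+a. f a * indicator {g 0..} a \<partial>lborel)
      = (\<integral>\<^sup>+\<alpha>. f (g \<alpha>) * g' \<alpha> * indicator {0..<pi - \<beta>} \<alpha> \<partial>lborel)"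
  proof (rule nn_integral_substitution_at_top)
    show "(g has_real_derivative g' \<alpha>) (at \<alpha>)" if "\<alpha> \<in> {0..<pi - \<beta>}" for \<alpha>
      unfolding g_def g'_def using sin_sum_pos[OF that]
      by (intro has_real_derivative_sine_ratio) simp
    show "continuous_on {0..<pi - \<beta>} g'"
      unfolding g'_def using sin_sum_pos by (intro continuous_intros) force
    show "filterlim g at_top (at_left (pi - \<beta>))"
      unfolding g_def by (rule sine_ratio_tendsto_at_top[OF \<beta>])
  qed (use \<beta> sin_\<beta> in \<open>auto simp: g_def g'_def\<close>)
  moreover have "(\<integral>\<^sup>+a. f a * indicator {g 0..} a \<partial>lborel)
      = (\<integral>\<^sup>+a. indicator {0<..} a * H (a, third_side a \<beta>) * ennreal (sin \<beta> / (third_side a \<beta>)\<^sup>2) \<partial>lborel)"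
    using AE_lborel_singleton[of 0]
    by (intro nn_integral_cong_AE) (auto simp: g_def f_def indicator_def)
  moreover have "f (g \<alpha>) * g' \<alpha> = H (sin \<alpha> / sin (\<alpha> + \<beta>), sin \<beta> / sin (\<alpha> + \<beta>))"
    if "\<alpha> \<in> {0..<pi - \<beta>}" for \<alpha>
  proof -
    have side: "third_side (g \<alpha>) \<beta> = sin \<beta> / sin (\<alpha> + \<beta>)"
      unfolding g_def using sin_sum_pos[OF that] sin_\<beta> by (intro third_side_sine_ratio) auto
    have "ennreal (sin \<beta> / (third_side (g \<alpha>) \<beta>)\<^sup>2) * ennreal (g' \<alpha>) = 1"
      unfolding side g'_def using sin_sum_pos[OF that] sin_\<beta>
      by (subst ennreal_mult[symmetric]) (auto simp: field_simps power2_eq_square)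
    then show ?thesis
      using side by (simp add: f_def g_def mult.assoc)
  qed
  then have "(\<integral>\<^sup>+\<alpha>. f (g \<alpha>) * g' \<alpha> * indicator {0..<pi - \<beta>} \<alpha> \<partial>lborel)
      = (\<integral>\<^sup>+\<alpha>. indicator {0<..<pi - \<beta>} \<alpha> * H (sin \<alpha> / sin (\<alpha> + \<beta>), sin \<beta> / sin (\<alpha> + \<beta>)) \<partial>lborel)"
    using AE_lborel_singleton[of 0] by (intro nn_integral_cong_AE) (auto simp: indicator_def)
  ultimately show ?thesis by simp
qed

lemma nn_integral_angle_to_third_side:
  fixes H :: "real \<times> real \<Rightarrow> ennreal" and a :: real
  assumes [measurable]: "H \<in> borel_measurable borel" and a: "0 < a" "a \<noteq> 1"
  shows "(\<integral>\<^sup>+\<beta>. indicator {0<..<pi} \<beta> * (H (a, third_side a \<beta>) * ennreal (sin \<beta> / (third_side a \<beta>)\<^sup>2)) \<partial>lborel)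
       = (\<integral>\<^sup>+b. indicator {\<bar>1 - a\<bar><..<1 + a} b * H (a, b) * ennreal (1 / (a * b)) \<partial>lborel)"
proof -
  define f where "f b = indicator {\<bar>1 - a\<bar><..<1 + a} b * H (a, b) * ennreal (1 / (a * b))" for b
  define g' where "g' \<beta> = a * sin \<beta> / third_side a \<beta>" for \<beta>
  have pos: "0 < third_side a \<beta>" for \<beta>
    using a by (simp add: third_side_pos)
  have [measurable]: "f \<in> borel_measurable borel"
    unfolding f_def by measurable
  have "(\<integral>\<^sup>+b. f b * indicator {third_side a 0..third_side a pi} b \<partial>lborel)
      = (\<integral>\<^sup>+\<beta>. f (third_side a \<beta>) * g' \<beta> * indicator {0..pi} \<beta> \<partial>lborel)"
  proof (rule nn_integral_substitution_aux)
    show "(third_side a has_real_derivative g' \<beta>) (at \<beta>)" for \<beta>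
      unfolding g'_def by (rule has_real_derivative_third_side[OF pos])
    have "third_side a \<beta> \<noteq> 0" for \<beta>
      using pos[of \<beta>] by linarith
    moreover have "continuous_on {0..pi} (third_side a)"
      unfolding third_side_def[abs_def] by (intro continuous_intros)
    ultimately show "continuous_on {0..pi} g'"
      unfolding g'_def by (intro continuous_intros) auto
    show "0 \<le> g' \<beta>" if "\<beta> \<in> {0..pi}" for \<beta>
      using that a pos[of \<beta>] sin_ge_zero[of \<beta>] by (simp add: g'_def)
  qed auto
  moreover have "(\<lambda>b. f b * indicator {third_side a 0..third_side a pi} b) = f"
    using a by (auto simp: fun_eq_iff f_def third_side_0 third_side_pi indicator_def)
  moreover have "f (third_side a \<beta>) * g' \<beta> * indicator {0..pi} \<beta>
      = indicator {0<..<pi} \<beta> * (H (a, third_side a \<beta>) * ennreal (sin \<beta> / (third_side a \<beta>)\<^sup>2))" for \<beta>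
  proof (cases "0 < \<beta> \<and> \<beta> < pi")
    case True
    have "ennreal (1 / (a * third_side a \<beta>)) * ennreal (g' \<beta>) = ennreal (sin \<beta> / (third_side a \<beta>)\<^sup>2)"
      using a pos[of \<beta>] True sin_ge_zero[of \<beta>]
      by (subst ennreal_mult[symmetric]) (auto simp: g'_def power2_eq_square)
    moreover have "third_side a \<beta> \<in> {\<bar>1 - a\<bar><..<1 + a}"
      using True third_side_strict_bounds[OF a(1), of \<beta>] by simp
    ultimately show ?thesis
      using True unfolding f_def by (simp add: indicator_def mult.assoc)
  next
    case False
    then have "\<beta> \<notin> {0..pi} \<or> \<beta> = 0 \<or> \<beta> = pi" by auto
    then show ?thesis
      using a by (auto simp: f_def third_side_0 third_side_pi indicator_def)
  qed
  ultimately show ?thesis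
    unfolding f_def[abs_def] by simp
qed

lemma angle_integral_eq_side_integral:
  fixes H :: "real \<times> real \<Rightarrow> ennreal"
  assumes [measurable]: "H \<in> borel_measurable borel"
  shows "angle_integral (\<lambda>(\<alpha>, \<beta>). H (sin \<alpha> / sin (\<alpha> + \<beta>), sin \<beta> / sin (\<alpha> + \<beta>))) = side_integral H"
proof -
  define K where "K a \<beta> = indicator {0<..<pi} \<beta> * indicator {0<..} a
    * H (a, third_side a \<beta>) * ennreal (sin \<beta> / (third_side a \<beta>)\<^sup>2)" for a \<beta> :: real
  have [measurable]: "case_prod K \<in> borel_measurable (lborel \<Otimes>\<^sub>M lborel)"
    unfolding K_def third_side_def by measurable
  have "indicator {0<..<pi} \<beta>
      * (\<integral>\<^sup>+\<alpha>. indicator {0<..<pi - \<beta>} \<alpha> * H (sin \<alpha> / sin (\<alpha> + \<beta>), sin \<beta> / sin (\<alpha> + \<beta>)) \<partial>lborel)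
      = (\<integral>\<^sup>+a. K a \<beta> \<partial>lborel)" for \<beta>
  proof (cases "0 < \<beta> \<and> \<beta> < pi")
    case True
    then show ?thesis
      by (simp add: nn_integral_angle_to_side K_def mult.assoc)
  qed (auto simp: K_def)
  then have "angle_integral (\<lambda>(\<alpha>, \<beta>). H (sin \<alpha> / sin (\<alpha> + \<beta>), sin \<beta> / sin (\<alpha> + \<beta>)))
      = (\<integral>\<^sup>+\<beta>. \<integral>\<^sup>+a. K a \<beta> \<partial>lborel \<partial>lborel)"
    by (simp add: angle_integral_def)
  also have "\<dots> = (\<integral>\<^sup>+a. \<integral>\<^sup>+\<beta>. K a \<beta> \<partial>lborel \<partial>lborel)"
    by (rule lborel_pair.Fubini') measurable
  also have "\<dots> = side_integral H"
    unfolding side_integral_def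
  proof (rule nn_integral_cong_AE)
    show "AE a in lborel. (\<integral>\<^sup>+\<beta>. K a \<beta> \<partial>lborel)
        = (\<integral>\<^sup>+b. indicator side_region (a, b) * H (a, b) * ennreal (1 / (a * b)) \<partial>lborel)"
      using AE_lborel_singleton[of 1]
    proof eventually_elim
      case (elim a)
      show ?case
      proof (cases "0 < a")
        case True
        have "(\<integral>\<^sup>+\<beta>. K a \<beta> \<partial>lborel) = (\<integral>\<^sup>+\<beta>. indicator {0<..<pi} \<beta>
            * (H (a, third_side a \<beta>) * ennreal (sin \<beta> / (third_side a \<beta>)\<^sup>2)) \<partial>lborel)"
          using True by (simp add: K_def mult.assoc)
        also have "\<dots> = (\<integral>\<^sup>+b. indicator {\<bar>1 - a\<bar><..<1 + a} b * H (a, b) * ennreal (1 / (a * b)) \<partial>lborel)"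
          using True elim by (intro nn_integral_angle_to_third_side) auto
        also have "\<dots> = (\<integral>\<^sup>+b. indicator side_region (a, b) * H (a, b) * ennreal (1 / (a * b)) \<partial>lborel)"
          by (intro nn_integral_cong) (simp add: side_region_iff[OF True] indicator_def)
        finally show ?thesis .
      qed (auto simp: K_def side_region_def)
    qed
  qed
  finally show ?thesis .
qed

lemma angle_integral_cong:
  assumes "\<And>\<alpha> \<beta>. 0 < \<beta> \<Longrightarrow> \<beta> < pi \<Longrightarrow> \<beta> \<noteq> pi/2 \<Longrightarrow> 0 < \<alpha> \<Longrightarrow> \<alpha> < pi - \<beta> \<Longrightarrow> \<alpha> \<noteq> pi/2 \<Longrightarrow>
      Q1 (\<alpha>, \<beta>) = Q2 (\<alpha>, \<beta>)"
  shows "angle_integral Q1 = angle_integral Q2"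
  unfolding angle_integral_def
proof (rule nn_integral_cong_AE)
  show "AE \<beta> in lborel. indicator {0<..<pi} \<beta> * (\<integral>\<^sup>+\<alpha>. indicator {0<..<pi - \<beta>} \<alpha> * Q1 (\<alpha>, \<beta>) \<partial>lborel)
      = indicator {0<..<pi} \<beta> * (\<integral>\<^sup>+\<alpha>. indicator {0<..<pi - \<beta>} \<alpha> * Q2 (\<alpha>, \<beta>) \<partial>lborel)"
    using AE_lborel_singleton[of "pi/2"]
  proof eventually_elim
    case (elim \<beta>)
    have "(\<integral>\<^sup>+\<alpha>. indicator {0<..<pi - \<beta>} \<alpha> * Q1 (\<alpha>, \<beta>) \<partial>lborel)
        = (\<integral>\<^sup>+\<alpha>. indicator {0<..<pi - \<beta>} \<alpha> * Q2 (\<alpha>, \<beta>) \<partial>lborel)" if "0 < \<beta>" "\<beta> < pi"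
      using AE_lborel_singleton[of "pi/2"]
      by (intro nn_integral_cong_AE, eventually_elim) (use assms that elim in \<open>auto simp: indicator_def\<close>)
    then show ?case by (auto simp: indicator_def)
  qed
qed

lemma angle_integral_triangle_sides:
  fixes k :: "real \<times> real \<Rightarrow> ennreal"
  assumes [measurable]: "k \<in> borel_measurable borel"
  shows "angle_integral (\<lambda>p. k (triangle_sides p)) = side_integral k"
proof -
  have "angle_integral (\<lambda>p. k (triangle_sides p))
      = angle_integral (\<lambda>(\<alpha>, \<beta>). k (sin \<alpha> / sin (\<alpha> + \<beta>), sin \<beta> / sin (\<alpha> + \<beta>)))"
    by (rule angle_integral_cong) (simp add: triangle_sides_law_of_sines)
  also have "\<dots> = side_integral k"
    by (rule angle_integral_eq_side_integral) measurable
  finally show ?thesis .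
qed

section \<open>Densities of the longer and the shorter side\<close>

lemma side_integral_cong:
  assumes "\<And>a b. (a, b) \<in> side_region \<Longrightarrow> H1 (a, b) = H2 (a, b)"
  shows "side_integral H1 = side_integral H2"
  unfolding side_integral_def by (intro nn_integral_cong) (auto simp: indicator_def assms)

lemma side_integral_add:
  assumes [measurable]: "H1 \<in> borel_measurable borel" "H2 \<in> borel_measurable borel"
  shows "side_integral (\<lambda>z. H1 z + H2 z) = side_integral H1 + side_integral H2"
proof -
  have "side_integral (\<lambda>z. H1 z + H2 z)
      = (\<integral>\<^sup>+a. (\<integral>\<^sup>+b. indicator side_region (a, b) * H1 (a, b) * ennreal (1 / (a * b)) \<partial>lborel)
        + (\<integral>\<^sup>+b. indicator side_region (a, b) * H2 (a, b) * ennreal (1 / (a * b)) \<partial>lborel) \<partial>lborel)"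
    unfolding side_integral_def
    by (intro nn_integral_cong, subst nn_integral_add[symmetric]) (auto simp: distrib_left distrib_right)
  also have "\<dots> = side_integral H1 + side_integral H2"
    unfolding side_integral_def by (rule nn_integral_add) measurable
  finally show ?thesis .
qed

lemma side_integral_swap:
  assumes [measurable]: "H \<in> borel_measurable borel"
  shows "side_integral (\<lambda>(a, b). H (b, a)) = side_integral H"
proof -
  have "side_integral H
      = (\<integral>\<^sup>+b. \<integral>\<^sup>+a. indicator side_region (a, b) * H (a, b) * ennreal (1 / (a * b)) \<partial>lborel \<partial>lborel)"
    unfolding side_integral_def by (rule lborel_pair.Fubini'[symmetric]) measurable
  also have "\<dots> = side_integral (\<lambda>(a, b). H (b, a))"
    unfolding side_integral_def
    by (intro nn_integral_cong) (simp add: indicator_def side_region_swap mult.commute)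
  finally show ?thesis ..
qed

lemma side_integral_symmetrize:
  fixes G :: "real \<times> real \<Rightarrow> ennreal"
  assumes [measurable]: "G \<in> borel_measurable borel"
  shows "side_integral (\<lambda>(a, b). of_bool (b < a) * G (a, b) + of_bool (a \<le> b) * G (b, a))
       = 2 * side_integral (\<lambda>(a, b). of_bool (b < a) * G (a, b))"
proof -
  have [measurable]: "G \<in> borel_measurable (borel \<Otimes>\<^sub>M borel)"
    using assms by (simp add: borel_prod)
  have "(\<lambda>(a, b). of_bool (b < a) * G (a, b)) \<in> borel_measurable (borel \<Otimes>\<^sub>M borel)"
      "(\<lambda>(a, b). of_bool (b \<le> a) * G (a, b)) \<in> borel_measurable (borel \<Otimes>\<^sub>M borel)"
      "(\<lambda>(a, b). of_bool (a \<le> b) * G (b, a)) \<in> borel_measurable (borel \<Otimes>\<^sub>M borel)"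
    by (measurable, measurable, measurable)
  then have lower_meas: "(\<lambda>(a, b). of_bool (b < a) * G (a, b)) \<in> borel_measurable borel"
      and lower_eq_meas: "(\<lambda>(a, b). of_bool (b \<le> a) * G (a, b)) \<in> borel_measurable borel"
      and upper_meas: "(\<lambda>(a, b). of_bool (a \<le> b) * G (b, a)) \<in> borel_measurable borel"
    by (simp_all add: borel_prod)
  have "side_integral (\<lambda>(a, b). of_bool (a \<le> b) * G (b, a))
      = side_integral (\<lambda>(a, b). of_bool (b \<le> a) * G (a, b))"
    using side_integral_swap[OF lower_eq_meas] by simp
  also have "\<dots> = side_integral (\<lambda>(a, b). of_bool (b < a) * G (a, b))"
    unfolding side_integral_def \<comment> \<open>the diagonal is a null set\<close>
    by (intro nn_integral_cong nn_integral_cong_AE, rule AE_mp[OF AE_lborel_singleton]) auto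
  finally have "side_integral (\<lambda>(a, b). of_bool (a \<le> b) * G (b, a))
      = side_integral (\<lambda>(a, b). of_bool (b < a) * G (a, b))" .
  moreover have "side_integral (\<lambda>(a, b). of_bool (b < a) * G (a, b) + of_bool (a \<le> b) * G (b, a))
      = side_integral (\<lambda>(a, b). of_bool (b < a) * G (a, b))
        + side_integral (\<lambda>(a, b). of_bool (a \<le> b) * G (b, a))"
    using side_integral_add[OF lower_meas upper_meas] by (simp add: split_beta')
  ultimately show ?thesis
    by (simp add: mult_2)
qed

definition max_kernel :: "real \<Rightarrow> real" where
  "max_kernel a = (if a > 1/2 then (ln a - ln \<bar>1 - a\<bar>) / a else 0)"

definition min_kernel :: "real \<Rightarrow> real" where
  "min_kernel b = (if 0 < b \<and> b < 1/2 then (ln (1 + b) - ln (1 - b)) / b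
    else if b > 1/2 then (ln (1 + b) - ln b) / b else 0)"

lemma max_density_eq: "max_density x = 4 / pi\<^sup>2 * max_kernel x"
  by (simp add: max_density_def max_kernel_def)

lemma min_density_eq: "min_density x = 4 / pi\<^sup>2 * min_kernel x"
  by (simp add: min_density_def min_kernel_def)

lemma max_kernel_nonneg: "0 \<le> max_kernel a"
proof (cases "1/2 < a \<and> a \<noteq> 1")
  case True
  then have "ln \<bar>1 - a\<bar> < ln a" by (subst ln_less_cancel_iff) auto
  with True show ?thesis by (simp add: max_kernel_def)
qed (auto simp: max_kernel_def)

lemma min_kernel_nonneg: "0 \<le> min_kernel b"
proof -
  have "ln (1 - b) < ln (1 + b)" if "0 < b" "b < 1/2" using that by (subst ln_less_cancel_iff) auto
  moreover have "ln b < ln (1 + b)" if "b > 1/2" using that by (subst ln_less_cancel_iff) auto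
  ultimately show ?thesis by (auto simp: min_kernel_def)
qed

lemma max_kernel_eq_nn_integral:
  assumes "0 < a" "a \<noteq> 1"
  shows "(\<integral>\<^sup>+b. indicator side_region (a, b) * of_bool (b < a) * ennreal (1 / (a * b)) \<partial>lborel)
       = ennreal (max_kernel a)"
proof (cases "a > 1/2")
  case True
  have "(\<integral>\<^sup>+b. indicator side_region (a, b) * of_bool (b < a) * ennreal (1 / (a * b)) \<partial>lborel)
      = (\<integral>\<^sup>+b. indicator {\<bar>1 - a\<bar><..<a} b * ennreal (1 / (a * b)) \<partial>lborel)"
    by (intro nn_integral_cong) (auto simp: indicator_def side_region_iff[OF assms(1)])
  also have "\<dots> = ennreal (max_kernel a)"
    using assms True by (subst nn_integral_inverse_interval) (auto simp: max_kernel_def)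
  finally show ?thesis .
next
  case False
  then have "(a, b) \<in> side_region \<Longrightarrow> \<not> b < a" for b
    by (auto simp: side_region_def abs_less_iff)
  then have "(\<lambda>b. indicator side_region (a, b) * of_bool (b < a) * ennreal (1 / (a * b))) = (\<lambda>b. 0)"
    by (auto simp: fun_eq_iff indicator_def)
  with False show ?thesis
    by (simp add: max_kernel_def)
qed

lemma min_kernel_eq_nn_integral:
  assumes "0 < b" "b \<noteq> 1/2"
  shows "(\<integral>\<^sup>+a. indicator side_region (a, b) * of_bool (b < a) * ennreal (1 / (a * b)) \<partial>lborel)
       = ennreal (min_kernel b)"
proof -
  define m where "m = max b (1 - b)"
  have "(a, b) \<in> side_region \<and> b < a \<longleftrightarrow> a \<in> {m<..<1 + b}" for a
    using assms by (auto simp: side_region_def m_def abs_less_iff)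
  then have "indicator side_region (a, b) * of_bool (b < a) = (indicator {m<..<1 + b} a :: ennreal)" for a
    by (auto simp: indicator_def m_def)
  then have "(\<integral>\<^sup>+a. indicator side_region (a, b) * of_bool (b < a) * ennreal (1 / (a * b)) \<partial>lborel)
      = (\<integral>\<^sup>+a. indicator {m<..<1 + b} a * ennreal (1 / (b * a)) \<partial>lborel)"
    by (simp add: mult.commute[of b])
  also have "\<dots> = ennreal ((ln (1 + b) - ln m) / b)"
    using assms by (intro nn_integral_inverse_interval) (auto simp: m_def)
  also have "(ln (1 + b) - ln m) / b = min_kernel b"
  proof (cases "b < 1/2")
    case True
    then show ?thesis using assms by (simp add: min_kernel_def m_def max_def)
  next
    case False
    then show ?thesis using assms by (simp add: min_kernel_def m_def max_def)
  qed
  finally show ?thesis .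
qed

lemma side_integral_below_diagonal_fst:
  fixes h :: "real \<Rightarrow> ennreal"
  assumes [measurable]: "h \<in> borel_measurable borel"
  shows "side_integral (\<lambda>(a, b). of_bool (b < a) * h a) = (\<integral>\<^sup>+a. h a * ennreal (max_kernel a) \<partial>lborel)"
  unfolding side_integral_def case_prod_conv
proof (rule nn_integral_cong_AE)
  show "AE a in lborel. (\<integral>\<^sup>+b. indicator side_region (a, b) * (of_bool (b < a) * h a)
      * ennreal (1 / (a * b)) \<partial>lborel) = h a * ennreal (max_kernel a)"
    using AE_lborel_singleton[of 1]
  proof eventually_elim
    case (elim a)
    show ?case
    proof (cases "0 < a")
      case True
      have "(\<integral>\<^sup>+b. indicator side_region (a, b) * (of_bool (b < a) * h a) * ennreal (1 / (a * b)) \<partial>lborel)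
          = h a * (\<integral>\<^sup>+b. indicator side_region (a, b) * of_bool (b < a) * ennreal (1 / (a * b)) \<partial>lborel)"
        by (subst nn_integral_cmult[symmetric]) (simp_all add: mult_ac)
      with True elim show ?thesis
        by (simp add: max_kernel_eq_nn_integral)
    qed (auto simp: side_region_def max_kernel_def)
  qed
qed

lemma side_integral_below_diagonal_snd:
  fixes h :: "real \<Rightarrow> ennreal"
  assumes [measurable]: "h \<in> borel_measurable borel"
  shows "side_integral (\<lambda>(a, b). of_bool (b < a) * h b) = (\<integral>\<^sup>+b. h b * ennreal (min_kernel b) \<partial>lborel)"
proof -
  have "side_integral (\<lambda>(a, b). of_bool (b < a) * h b)
      = (\<integral>\<^sup>+b. \<integral>\<^sup>+a. indicator side_region (a, b) * (of_bool (b < a) * h b) * ennreal (1 / (a * b)) \<partial>lborel \<partial>lborel)"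
    unfolding side_integral_def case_prod_conv by (rule lborel_pair.Fubini'[symmetric]) measurable
  also have "\<dots> = (\<integral>\<^sup>+b. h b * ennreal (min_kernel b) \<partial>lborel)"
  proof (rule nn_integral_cong_AE)
    show "AE b in lborel. (\<integral>\<^sup>+a. indicator side_region (a, b) * (of_bool (b < a) * h b)
        * ennreal (1 / (a * b)) \<partial>lborel) = h b * ennreal (min_kernel b)"
      using AE_lborel_singleton[of "1/2"]
    proof eventually_elim
      case (elim b)
      show ?case
      proof (cases "0 < b")
        case True
        have "(\<integral>\<^sup>+a. indicator side_region (a, b) * (of_bool (b < a) * h b) * ennreal (1 / (a * b)) \<partial>lborel)
            = h b * (\<integral>\<^sup>+a. indicator side_region (a, b) * of_bool (b < a) * ennreal (1 / (a * b)) \<partial>lborel)"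
          by (subst nn_integral_cmult[symmetric]) (simp_all add: mult_ac)
        with True elim show ?thesis
          by (simp add: min_kernel_eq_nn_integral)
      qed (auto simp: side_region_def min_kernel_def)
    qed
  qed
  finally show ?thesis .
qed

lemma side_integral_max_density:
  fixes h :: "real \<Rightarrow> ennreal"
  assumes [measurable]: "h \<in> borel_measurable borel"
  shows "ennreal (2 / pi\<^sup>2) * side_integral (\<lambda>(a, b). h (max a b))
       = (\<integral>\<^sup>+x. ennreal (max_density x) * h x \<partial>lborel)"
proof -
  have [measurable]: "max_kernel \<in> borel_measurable borel"
    unfolding max_kernel_def by measurable
  have "(\<lambda>(a, b :: real). h a) \<in> borel_measurable (borel \<Otimes>\<^sub>M borel)"
    by measurable
  then have "(\<lambda>(a, b :: real). h a) \<in> borel_measurable borel"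
    by (simp add: borel_prod)
  note symmetrize = side_integral_symmetrize[OF this]
  have "side_integral (\<lambda>(a, b). h (max a b))
      = side_integral (\<lambda>(a, b). of_bool (b < a) * h a + of_bool (a \<le> b) * h b)"
    by (rule side_integral_cong) (auto simp: max_def)
  also have "\<dots> = 2 * (\<integral>\<^sup>+a. h a * ennreal (max_kernel a) \<partial>lborel)"
    using symmetrize by (simp add: side_integral_below_diagonal_fst)
  finally show ?thesis
    using nn_integral_cmult_weight[of "4 / pi\<^sup>2" max_kernel h lborel] max_kernel_nonneg
    by (simp add: max_density_eq ennreal_mult_two)
qed

lemma side_integral_min_density:
  fixes h :: "real \<Rightarrow> ennreal"
  assumes [measurable]: "h \<in> borel_measurable borel"
  shows "ennreal (2 / pi\<^sup>2) * side_integral (\<lambda>(a, b). h (min a b))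
       = (\<integral>\<^sup>+x. ennreal (min_density x) * h x \<partial>lborel)"
proof -
  have [measurable]: "min_kernel \<in> borel_measurable borel"
    unfolding min_kernel_def by measurable
  have "(\<lambda>(a :: real, b). h b) \<in> borel_measurable (borel \<Otimes>\<^sub>M borel)"
    by measurable
  then have "(\<lambda>(a :: real, b). h b) \<in> borel_measurable borel"
    by (simp add: borel_prod)
  note symmetrize = side_integral_symmetrize[OF this]
  have "side_integral (\<lambda>(a, b). h (min a b))
      = side_integral (\<lambda>(a, b). of_bool (b < a) * h b + of_bool (a \<le> b) * h a)"
    by (rule side_integral_cong) (auto simp: min_def)
  also have "\<dots> = 2 * (\<integral>\<^sup>+b. h b * ennreal (min_kernel b) \<partial>lborel)"
    using symmetrize by (simp add: side_integral_below_diagonal_snd)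
  finally show ?thesis
    using nn_integral_cmult_weight[of "4 / pi\<^sup>2" min_kernel h lborel] min_kernel_nonneg
    by (simp add: min_density_eq ennreal_mult_two)
qed

section \<open>Uniform random angles\<close>

lemma angle_integral_eq_triangle:
  fixes Q :: "real \<times> real \<Rightarrow> ennreal" and C :: "real \<Rightarrow> real \<Rightarrow> bool"
  assumes [measurable]: "Q \<in> borel_measurable borel"
    and C: "\<And>\<alpha> \<beta>. \<beta> \<noteq> 0 \<Longrightarrow> \<alpha> \<noteq> 0 \<Longrightarrow> \<alpha> \<noteq> pi - \<beta> \<Longrightarrow>
      C \<alpha> \<beta> \<longleftrightarrow> 0 < \<beta> \<and> \<beta> < pi \<and> 0 < \<alpha> \<and> \<alpha> < pi - \<beta>"
  shows "(\<integral>\<^sup>+\<beta>. \<integral>\<^sup>+\<alpha>. of_bool (C \<alpha> \<beta>) * Q (\<alpha>, \<beta>) \<partial>lborel \<partial>lborel) = angle_integral Q"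
  unfolding angle_integral_def
proof (rule nn_integral_cong_AE)
  show "AE \<beta> in lborel. (\<integral>\<^sup>+\<alpha>. of_bool (C \<alpha> \<beta>) * Q (\<alpha>, \<beta>) \<partial>lborel)
      = indicator {0<..<pi} \<beta> * (\<integral>\<^sup>+\<alpha>. indicator {0<..<pi - \<beta>} \<alpha> * Q (\<alpha>, \<beta>) \<partial>lborel)"
    using AE_lborel_singleton[of 0]
  proof eventually_elim
    case (elim \<beta>)
    have "(\<integral>\<^sup>+\<alpha>. of_bool (C \<alpha> \<beta>) * Q (\<alpha>, \<beta>) \<partial>lborel)
        = (\<integral>\<^sup>+\<alpha>. indicator {0<..<pi} \<beta> * (indicator {0<..<pi - \<beta>} \<alpha> * Q (\<alpha>, \<beta>)) \<partial>lborel)"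
      using AE_lborel_singleton[of 0] AE_lborel_singleton[of "pi - \<beta>"]
      by (intro nn_integral_cong_AE, eventually_elim) (use C elim in \<open>auto simp: indicator_def\<close>)
    also have "\<dots> = indicator {0<..<pi} \<beta> * (\<integral>\<^sup>+\<alpha>. indicator {0<..<pi - \<beta>} \<alpha> * Q (\<alpha>, \<beta>) \<partial>lborel)"
      by (rule nn_integral_cmult) measurable
    finally show ?case .
  qed
qed

text \<open>On the half \<open>\<phi> + \<psi> \<ge> \<pi>\<close> the folding is undone by reflecting both coordinates.\<close>
lemma nn_integral_square_angles:
  fixes Q :: "real \<times> real \<Rightarrow> ennreal"
  assumes [measurable]: "Q \<in> borel_measurable borel"
  shows "(\<integral>\<^sup>+\<phi>. \<integral>\<^sup>+\<psi>. indicator {0..pi} \<phi> * indicator {0..pi} \<psi> * Q (angles \<phi> \<psi>) \<partial>lborel \<partial>lborel)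
       = 2 * angle_integral Q"
proof -
  define S1 where "S1 \<phi> \<psi> = of_bool (0 \<le> \<phi> \<and> 0 \<le> \<psi> \<and> \<phi> + \<psi> < pi) * Q (\<phi>, \<psi>)" for \<phi> \<psi> :: real
  define S2 where "S2 \<phi> \<psi> = of_bool (\<phi> \<le> pi \<and> \<psi> \<le> pi \<and> pi \<le> \<phi> + \<psi>) * Q (pi - \<psi>, pi - \<phi>)"
    for \<phi> \<psi> :: real
  have [measurable]: "case_prod S1 \<in> borel_measurable (lborel \<Otimes>\<^sub>M lborel)"
    "case_prod S2 \<in> borel_measurable (lborel \<Otimes>\<^sub>M lborel)"
    unfolding S1_def S2_def by (measurable, measurable)
  have reflect: "(\<integral>\<^sup>+x. f x \<partial>lborel) = (\<integral>\<^sup>+x. f (pi - x) \<partial>lborel)"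
    if "f \<in> borel_measurable borel" for f :: "real \<Rightarrow> ennreal"
    using nn_integral_real_affine[OF that, of "-1" pi] by simp
  have split: "indicator {0..pi} \<phi> * indicator {0..pi} \<psi> * Q (angles \<phi> \<psi>) = S1 \<phi> \<psi> + S2 \<phi> \<psi>"
    for \<phi> \<psi>
    by (auto simp: S1_def S2_def angles_def indicator_def)
  have "(\<integral>\<^sup>+\<phi>. \<integral>\<^sup>+\<psi>. indicator {0..pi} \<phi> * indicator {0..pi} \<psi> * Q (angles \<phi> \<psi>) \<partial>lborel \<partial>lborel)
      = (\<integral>\<^sup>+\<phi>. (\<integral>\<^sup>+\<psi>. S1 \<phi> \<psi> \<partial>lborel) + (\<integral>\<^sup>+\<psi>. S2 \<phi> \<psi> \<partial>lborel) \<partial>lborel)"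
    unfolding split by (intro nn_integral_cong nn_integral_add) (unfold S1_def S2_def, measurable)
  also have "\<dots> = (\<integral>\<^sup>+\<phi>. \<integral>\<^sup>+\<psi>. S1 \<phi> \<psi> \<partial>lborel \<partial>lborel) + (\<integral>\<^sup>+\<phi>. \<integral>\<^sup>+\<psi>. S2 \<phi> \<psi> \<partial>lborel \<partial>lborel)"
    by (rule nn_integral_add) measurable
  also have "(\<integral>\<^sup>+\<phi>. \<integral>\<^sup>+\<psi>. S1 \<phi> \<psi> \<partial>lborel \<partial>lborel) = (\<integral>\<^sup>+\<psi>. \<integral>\<^sup>+\<phi>. S1 \<phi> \<psi> \<partial>lborel \<partial>lborel)"
    by (rule lborel_pair.Fubini'[symmetric]) measurable
  also have "\<dots> = angle_integral Q"
    unfolding S1_def by (rule angle_integral_eq_triangle) auto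
  also have "(\<integral>\<^sup>+\<phi>. \<integral>\<^sup>+\<psi>. S2 \<phi> \<psi> \<partial>lborel \<partial>lborel) = (\<integral>\<^sup>+\<phi>. \<integral>\<^sup>+\<alpha>. S2 \<phi> (pi - \<alpha>) \<partial>lborel \<partial>lborel)"
    by (intro nn_integral_cong reflect) (unfold S2_def, measurable)
  also have "\<dots> = (\<integral>\<^sup>+\<beta>. \<integral>\<^sup>+\<alpha>. S2 (pi - \<beta>) (pi - \<alpha>) \<partial>lborel \<partial>lborel)"
    by (rule reflect) (unfold S2_def, measurable)
  also have "\<dots> = (\<integral>\<^sup>+\<beta>. \<integral>\<^sup>+\<alpha>. of_bool (0 \<le> \<beta> \<and> 0 \<le> \<alpha> \<and> \<alpha> + \<beta> \<le> pi) * Q (\<alpha>, \<beta>) \<partial>lborel \<partial>lborel)"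
    by (intro nn_integral_cong) (auto simp: S2_def)
  also have "\<dots> = angle_integral Q"
    by (rule angle_integral_eq_triangle) auto
  finally show ?thesis
    by (simp add: mult_2)
qed

lemma nn_integral_uniform_angles_sides:
  fixes k :: "real \<times> real \<Rightarrow> ennreal"
  assumes [measurable]: "k \<in> borel_measurable borel"
  shows "(\<integral>\<^sup>+z. (\<lambda>(\<phi>, \<psi>). ennreal (indicator {0..pi} \<phi> / pi) * ennreal (indicator {0..pi} \<psi> / pi)) z
            * k (side_a (fst z) (snd z), side_b (fst z) (snd z)) \<partial>(lborel \<Otimes>\<^sub>M lborel))
       = ennreal (2 / pi\<^sup>2) * side_integral k"
    (is "integral\<^sup>N _ ?F = _")
proof -
  define Q where "Q p = k (triangle_sides p)" for p
  have Q_meas [measurable]: "Q \<in> borel_measurable borel"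
    unfolding Q_def by measurable
  have "?F (\<phi>, \<psi>) = ennreal (1 / pi\<^sup>2) * (indicator {0..pi} \<phi> * indicator {0..pi} \<psi> * Q (angles \<phi> \<psi>))"
    for \<phi> \<psi> :: real
    by (auto simp: Q_def side_a_side_b_eq_triangle_sides indicator_def ennreal_mult[symmetric]
        power2_eq_square)
  moreover have "?F \<in> borel_measurable (lborel \<Otimes>\<^sub>M lborel)"
    by measurable
  ultimately have "(\<integral>\<^sup>+z. ?F z \<partial>(lborel \<Otimes>\<^sub>M lborel))
      = (\<integral>\<^sup>+\<phi>. \<integral>\<^sup>+\<psi>. ennreal (1 / pi\<^sup>2)
          * (indicator {0..pi} \<phi> * indicator {0..pi} \<psi> * Q (angles \<phi> \<psi>)) \<partial>lborel \<partial>lborel)"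
    by (simp add: lborel.nn_integral_fst[symmetric])
  also have "\<dots> = (\<integral>\<^sup>+\<phi>. ennreal (1 / pi\<^sup>2)
      * (\<integral>\<^sup>+\<psi>. indicator {0..pi} \<phi> * indicator {0..pi} \<psi> * Q (angles \<phi> \<psi>) \<partial>lborel) \<partial>lborel)"
    by (intro nn_integral_cong nn_integral_cmult) (unfold angles_def, measurable)
  also have "\<dots> = ennreal (1 / pi\<^sup>2)
      * (\<integral>\<^sup>+\<phi>. \<integral>\<^sup>+\<psi>. indicator {0..pi} \<phi> * indicator {0..pi} \<psi> * Q (angles \<phi> \<psi>) \<partial>lborel \<partial>lborel)"
    by (rule nn_integral_cmult) (unfold angles_def, measurable)
  also have "\<dots> = ennreal (1 / pi\<^sup>2) * (2 * side_integral k)"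
    using nn_integral_square_angles[OF Q_meas] angle_integral_triangle_sides[of k]
    by (simp add: Q_def[abs_def])
  finally show ?thesis
    by (simp add: ennreal_mult_two)
qed

lemma distributed_side_function:
  fixes M :: "'s measure" and \<phi> \<psi> :: "'s \<Rightarrow> real"
    and g :: "real \<times> real \<Rightarrow> real" and f :: "real \<Rightarrow> real"
  assumes joint: "distributed M (lborel \<Otimes>\<^sub>M lborel) (\<lambda>x. (\<phi> x, \<psi> x))
      (\<lambda>(\<phi>, \<psi>). ennreal (indicator {0..pi} \<phi> / pi) * ennreal (indicator {0..pi} \<psi> / pi))"
    and [measurable]: "g \<in> borel_measurable borel" "f \<in> borel_measurable borel"
    and density: "\<And>h. h \<in> borel_measurable borel \<Longrightarrow>
      ennreal (2 / pi\<^sup>2) * side_integral (\<lambda>z. h (g z)) = (\<integral>\<^sup>+x. ennreal (f x) * h x \<partial>lborel)"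
  shows "distributed M lborel (\<lambda>\<omega>. g (side_a (\<phi> \<omega>) (\<psi> \<omega>), side_b (\<phi> \<omega>) (\<psi> \<omega>))) (\<lambda>x. ennreal (f x))"
proof -
  have "(\<lambda>x. (\<phi> x, \<psi> x)) \<in> measurable M (lborel \<Otimes>\<^sub>M lborel)"
    using joint by (rule distributed_measurable)
  then have [measurable]: "\<phi> \<in> borel_measurable M" "\<psi> \<in> borel_measurable M"
    by (auto simp: measurable_pair_iff measurable_lborel2 comp_def)
  define X where "X \<omega> = g (side_a (\<phi> \<omega>) (\<psi> \<omega>), side_b (\<phi> \<omega>) (\<psi> \<omega>))" for \<omega>
  have [measurable]: "X \<in> borel_measurable M"
    unfolding X_def by measurable
  have "distr M lborel X = density lborel (\<lambda>x. ennreal (f x))"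
  proof (rule measure_eqI)
    fix A assume "A \<in> sets (distr M lborel X)"
    then have [measurable]: "A \<in> sets borel" by simp
    have "emeasure (distr M lborel X) A = (\<integral>\<^sup>+x. indicator A x \<partial>distr M lborel X)"
      by simp
    also have "\<dots> = (\<integral>\<^sup>+\<omega>. indicator A (X \<omega>) \<partial>M)"
      by (rule nn_integral_distr) measurable
    also have "\<dots> = (\<integral>\<^sup>+z. (\<lambda>(\<phi>, \<psi>). ennreal (indicator {0..pi} \<phi> / pi) * ennreal (indicator {0..pi} \<psi> / pi)) z
        * indicator A (g (side_a (fst z) (snd z), side_b (fst z) (snd z))) \<partial>(lborel \<Otimes>\<^sub>M lborel))"
      by (subst distributed_nn_integral[OF joint]) (simp_all add: X_def)
    also have "\<dots> = ennreal (2 / pi\<^sup>2) * side_integral (\<lambda>z. indicator A (g z))"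
      by (rule nn_integral_uniform_angles_sides) measurable
    also have "\<dots> = emeasure (density lborel (\<lambda>x. ennreal (f x))) A"
      by (simp add: density emeasure_density)
    finally show "emeasure (distr M lborel X) A = emeasure (density lborel (\<lambda>x. ennreal (f x))) A" .
  qed simp
  then show ?thesis
    unfolding distributed_def X_def by simp
qed

theorem mainTheorem19:
  fixes M :: "'s measure" and \<phi> \<psi> :: "'s \<Rightarrow> real"
  assumes "prob_space M"
    and "prob_space.indep_var M borel \<phi> borel \<psi>"
    and "distributed M lborel \<phi> (\<lambda>x. ennreal (indicator {0..pi} x / pi))"
    and "distributed M lborel \<psi> (\<lambda>x. ennreal (indicator {0..pi} x / pi))"
  shows "distributed M lborel (\<lambda>\<omega>. max (side_a (\<phi> \<omega>) (\<psi> \<omega>)) (side_b (\<phi> \<omega>) (\<psi> \<omega>)))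
           (\<lambda>x. ennreal (max_density x))
       \<and> distributed M lborel (\<lambda>\<omega>. min (side_a (\<phi> \<omega>) (\<psi> \<omega>)) (side_b (\<phi> \<omega>) (\<psi> \<omega>)))
           (\<lambda>y. ennreal (min_density y))"
proof -
  interpret prob_space M by (rule assms(1))
  have "indep_var lborel \<phi> lborel \<psi>"
    using assms(2) by (simp add: indep_var_eq)
  then have joint: "distributed M (lborel \<Otimes>\<^sub>M lborel) (\<lambda>x. (\<phi> x, \<psi> x))
      (\<lambda>(\<phi>, \<psi>). ennreal (indicator {0..pi} \<phi> / pi) * ennreal (indicator {0..pi} \<psi> / pi))"
    using assms(3,4) by (intro distributed_joint_indep sigma_finite_lborel)
  have [measurable]: "max_density \<in> borel_measurable borel" "min_density \<in> borel_measurable borel"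
    unfolding max_density_def min_density_def by measurable
  have "(\<lambda>(a, b). max a b :: real) \<in> borel_measurable borel"
    by (subst borel_prod[symmetric]) measurable
  then have "distributed M lborel (\<lambda>\<omega>. (\<lambda>(a, b). max a b) (side_a (\<phi> \<omega>) (\<psi> \<omega>), side_b (\<phi> \<omega>) (\<psi> \<omega>)))
      (\<lambda>x. ennreal (max_density x))"
    using side_integral_max_density by (intro distributed_side_function[OF joint]) (simp_all add: split_beta')
  moreover have "(\<lambda>(a, b). min a b :: real) \<in> borel_measurable borel"
    by (subst borel_prod[symmetric]) measurable
  then have "distributed M lborel (\<lambda>\<omega>. (\<lambda>(a, b). min a b) (side_a (\<phi> \<omega>) (\<psi> \<omega>), side_b (\<phi> \<omega>) (\<psi> \<omega>)))
      (\<lambda>y. ennreal (min_density y))"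
    using side_integral_min_density by (intro distributed_side_function[OF joint]) (simp_all add: split_beta')
  ultimately show ?thesis
    by simp
qed

end
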